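(* Assume $p_{i,n}\ge0$ for all $n$ and $i$. Let $\xi_1,\xi_2,\dots$ be independent random variables with $\xi_n\in\{0,1,\dots,m_n\}$ and $\mathbb P\{\xi_n=i\}=p_{i,n}$, and let $\eta=\Delta^{\tilde Q}_{\xi_1\xi_2\dots\xi_n\dots}$. Then the distribution function $F_\eta(x)=\mathbb P\{\eta<x\}$ is $$F_\eta(x)=\begin{cases}0,& x<0,\\ \beta_{i_1(x),1}+\sum_{n=2}^{\infty}\Big[\tilde\beta_{i_n(x),n}\prod_{j=1}^{n-1}\tilde p_{i_j(x),j}\Big],& 0\le x<1,\\ 1,& x\ge1,\end{cases}$$ where $x=\Delta^{-\tilde Q}_{i_1(x)i_2(x)\dots}$.
   Context: Let $(m_n)_{n\ge1}$ be finite nonnegative integers and $\tilde Q=\|q_{i,n}\|$ ($i\in\{0,\dots,m_n\}$) with $q_{i,n}>0$, $\sum_{i}q_{i,n}=1$ for all $n$, and $\prod_n q_{i_n,n}=0$ for every digit sequence $(i_n)$. Put $a_{0,n}=0$, $a_{i,n}=\sum_{l<i}q_{l,n}$; $\Delta^{\tilde Q}_{j_1j_2\dots}=a_{j_1,1}+\sum_{n\ge2}a_{j_n,n}\prod_{l<n}q_{j_l,l}$. The nega-$\tilde Q$-representation $x=\Delta^{-\tilde Q}_{i_1i_2\dots}$ means $x=\Delta^{\tilde Q}_{i_1[m_2-i_2]i_3[m_4-i_4]\dots}$; every $x\in[0,1]$ has one (the formula gives the same value for both representations of a point that has two). Let $P=\|p_{i,n}\|$ have the same shape with $p_{i,n}\in(-1,1)$,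 $\sum_ip_{i,n}=1$, $\prod_n|p_{i_n,n}|=0$ for every digit sequence, $0<\sum_{i<c}p_{i,n}<1$ for $c\in\{1,\dots,m_n\}$. Put $\beta_{0,n}=0$, $\beta_{c,n}=\sum_{i<c}p_{i,n}$; for odd $n$: $\tilde p_{i,n}=p_{i,n}$, $\tilde\beta_{i,n}=\beta_{i,n}$; for even $n$: $\tilde p_{i,n}=p_{m_n-i,n}$, $\tilde\beta_{i,n}=\beta_{m_n-i,n}$. *)

theory Defs
  imports "HOL-Probability.Probability"
begin

text \<open>Indices n of the matrices start at 1; q i n stands for q_{i,n}, m n for m_n.
  Digit sequences are functions d :: nat => nat, only the values d n for n >= 1 matter.\<close>

definition aQ :: "(nat \<Rightarrow> nat \<Rightarrow> real) \<Rightarrow> nat \<Rightarrow> nat \<Rightarrow> real" where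
  "aQ q i n = (\<Sum>l<i. q l n)"

text \<open>Delta^Q_{d_1 d_2 ...} = a_{d_1,1} + sum_{n>=2} a_{d_n,n} prod_{l<n} q_{d_l,l}
  (written as one series over n >= 1, the empty product being 1).\<close>
definition DeltaQ :: "(nat \<Rightarrow> nat \<Rightarrow> real) \<Rightarrow> (nat \<Rightarrow> nat) \<Rightarrow> real" where
  "DeltaQ q d = (\<Sum>n. aQ q (d (Suc n)) (Suc n) * (\<Prod>l\<in>{1..n}. q (d l) l))"

definition negaDigits :: "(nat \<Rightarrow> nat) \<Rightarrow> (nat \<Rightarrow> nat) \<Rightarrow> (nat \<Rightarrow> nat)" where
  "negaDigits m d = (\<lambda>n. if even n then m n - d n else d n)"

definition DeltaNegQ :: "(nat \<Rightarrow> nat) \<Rightarrow> (nat \<Rightarrow> nat \<Rightarrow> real) \<Rightarrow> (nat \<Rightarrow> nat) \<Rightarrow> real" where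
  "DeltaNegQ m q d = DeltaQ q (negaDigits m d)"

definition betaP :: "(nat \<Rightarrow> nat \<Rightarrow> real) \<Rightarrow> nat \<Rightarrow> nat \<Rightarrow> real" where
  "betaP p c n = (\<Sum>i<c. p i n)"

definition tildeP :: "(nat \<Rightarrow> nat) \<Rightarrow> (nat \<Rightarrow> nat \<Rightarrow> real) \<Rightarrow> nat \<Rightarrow> nat \<Rightarrow> real" where
  "tildeP m p i n = (if odd n then p i n else p (m n - i) n)"

definition tildeBeta :: "(nat \<Rightarrow> nat) \<Rightarrow> (nat \<Rightarrow> nat \<Rightarrow> real) \<Rightarrow> nat \<Rightarrow> nat \<Rightarrow> real" where
  "tildeBeta m p i n = (if odd n then betaP p i n else betaP p (m n - i) n)"

definition digitseq :: "(nat \<Rightarrow> nat) \<Rightarrow> (nat \<Rightarrow> nat) \<Rightarrow> bool" where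
  "digitseq m d \<longleftrightarrow> (\<forall>n\<ge>1. d n \<le> m n)"

end

theory Submission
  imports Defs
begin

text \<open>The value \<open>\<Delta>\<^sup>Q\<close> of a digit sequence is monotone in the lexicographic order of digit
  sequences, and a lexicographically smaller sequence can have the same value only if its digits
  are maximal (\<open>d\<^sub>n = m\<^sub>n\<close>) from the first difference on. With \<open>c\<close> the ordinary \<open>Q\<close>-digits of
  \<open>x = \<Delta>\<^sup>-\<^sup>Q\<^sub>d\<close>, the event \<open>\<eta> < x\<close> is therefore, up to countably many events that fix every digit
  of \<open>\<xi>\<close> and hence have probability \<open>\<Prod>p = 0\<close>, the disjoint union over \<open>k\<close> of the events
  "\<open>\<xi>\<close> agrees with \<open>c\<close> at the first \<open>k\<close> positions and \<open>\<xi>\<^sub>k\<^sub>+\<^sub>1 < c\<^sub>k\<^sub>+\<^sub>1\<close>", of probability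
  \<open>\<beta>\<^bsub>c\<^sub>k\<^sub>+\<^sub>1,k+1\<^esub> \<Prod>\<^sub>j\<^sub>\<le>\<^sub>k p\<^bsub>c\<^sub>j,j\<^esub>\<close>. Since \<open>c\<^sub>n = m\<^sub>n - d\<^sub>n\<close> at even \<open>n\<close>, this is the claimed series.\<close>

locale Q_matrix =
  fixes m :: "nat \<Rightarrow> nat" and q :: "nat \<Rightarrow> nat \<Rightarrow> real"
  assumes q_pos: "\<And>n i. n \<ge> 1 \<Longrightarrow> i \<le> m n \<Longrightarrow> q i n > 0"
    and q_sum: "\<And>n. n \<ge> 1 \<Longrightarrow> (\<Sum>i\<le>m n. q i n) = 1"
begin

lemma aQ_nonneg: "n \<ge> 1 \<Longrightarrow> i \<le> m n \<Longrightarrow> aQ q i n \<ge> 0"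
  unfolding aQ_def by (intro sum_nonneg) (auto intro: less_imp_le[OF q_pos])

lemma aQ_plus_q: "aQ q i n + q i n = (\<Sum>l<Suc i. q l n)"
  unfolding aQ_def by simp

lemma aQ_plus_q_le_aQ:
  assumes "n \<ge> 1" "i < i'" "i' \<le> m n"
  shows "aQ q i n + q i n \<le> aQ q i' n"
  unfolding aQ_plus_q unfolding aQ_def
  using assms by (intro sum_mono2) (auto intro: less_imp_le[OF q_pos])

lemma aQ_plus_q_max: "n \<ge> 1 \<Longrightarrow> aQ q (m n) n + q (m n) n = 1"
  using q_sum unfolding aQ_plus_q by (simp add: lessThan_Suc_atMost)

lemma aQ_plus_q_less_1:
  assumes "n \<ge> 1" "i < m n"
  shows "aQ q i n + q i n < 1"
  using aQ_plus_q_le_aQ[OF assms order_refl] aQ_plus_q_max[OF assms(1)] q_pos[OF assms(1), of "m n"]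
  by simp

lemma aQ_plus_q_le_1: "n \<ge> 1 \<Longrightarrow> i \<le> m n \<Longrightarrow> aQ q i n + q i n \<le> 1"
  using aQ_plus_q_less_1 aQ_plus_q_max by (cases "i = m n") (auto intro: less_imp_le)

text \<open>\<open>Q_tail k d\<close> is \<open>\<Delta>\<^sup>Q\<^bsub>d\<^sub>k\<^sub>+\<^sub>1 d\<^sub>k\<^sub>+\<^sub>2 \<dots>\<^esub>\<close> computed with the columns \<open>k+1, k+2, \<dots>\<close> of \<open>Q\<close>,
  and \<open>Q_prod k d n\<close> is the length of the cylinder interval of the digits \<open>d\<^sub>k\<^sub>+\<^sub>1 \<dots> d\<^sub>k\<^sub>+\<^sub>n\<close>.\<close>

definition Q_prod :: "nat \<Rightarrow> (nat \<Rightarrow> nat) \<Rightarrow> nat \<Rightarrow> real" where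
  "Q_prod k d n = (\<Prod>l\<in>{Suc k..k + n}. q (d l) l)"

definition Q_tail_term :: "nat \<Rightarrow> (nat \<Rightarrow> nat) \<Rightarrow> nat \<Rightarrow> real" where
  "Q_tail_term k d n = aQ q (d (Suc (k + n))) (Suc (k + n)) * Q_prod k d n"

definition Q_tail :: "nat \<Rightarrow> (nat \<Rightarrow> nat) \<Rightarrow> real" where
  "Q_tail k d = (\<Sum>n. Q_tail_term k d n)"

lemma DeltaQ_eq_Q_tail: "DeltaQ q d = Q_tail 0 d"
  unfolding DeltaQ_def Q_tail_def Q_tail_term_def Q_prod_def by simp

lemma Q_tail_cong: "(\<And>j. j > k \<Longrightarrow> d j = e j) \<Longrightarrow> Q_tail k d = Q_tail k e"
  unfolding Q_tail_def Q_tail_term_def Q_prod_def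
  by (intro arg_cong[where f = suminf] ext arg_cong2[where f = "(*)"] prod.cong) auto

lemma Q_prod_pos: "digitseq m d \<Longrightarrow> Q_prod k d n > 0"
  unfolding Q_prod_def digitseq_def by (intro prod_pos) (auto intro: q_pos)

lemma Q_prod_0 [simp]: "Q_prod k d 0 = 1"
  unfolding Q_prod_def by simp

lemma Q_prod_Suc: "Q_prod k d (Suc n) = Q_prod k d n * q (d (Suc (k + n))) (Suc (k + n))"
  unfolding Q_prod_def by (simp add: prod.nat_ivl_Suc' mult.commute)

lemma Q_prod_Suc_shift: "Q_prod k d (Suc n) = q (d (Suc k)) (Suc k) * Q_prod (Suc k) d n"
  unfolding Q_prod_def by (simp add: prod.atLeast_Suc_atMost)

lemma Q_tail_term_nonneg: "digitseq m d \<Longrightarrow> 0 \<le> Q_tail_term k d n"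
  unfolding Q_tail_term_def
  by (intro mult_nonneg_nonneg aQ_nonneg less_imp_le[OF Q_prod_pos]) (auto simp: digitseq_def)

text \<open>The terms telescope against the cylinder lengths.\<close>
lemma Q_tail_term_le:
  assumes "digitseq m d"
  shows "Q_tail_term k d n \<le> Q_prod k d n - Q_prod k d (Suc n)"
proof -
  have "aQ q (d (Suc (k + n))) (Suc (k + n)) \<le> 1 - q (d (Suc (k + n))) (Suc (k + n))"
    using aQ_plus_q_le_1[of "Suc (k + n)" "d (Suc (k + n))"] assms unfolding digitseq_def by simp
  then have "Q_tail_term k d n \<le> (1 - q (d (Suc (k + n))) (Suc (k + n))) * Q_prod k d n"
    unfolding Q_tail_term_def using less_imp_le[OF Q_prod_pos[OF assms]] by (intro mult_right_mono)
  then show ?thesis unfolding Q_prod_Suc by (simp add: algebra_simps)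
qed

lemma Q_tail_partial_sum_le:
  assumes "digitseq m d"
  shows "(\<Sum>n<N. Q_tail_term k d n) \<le> 1 - Q_prod k d N"
proof (induction N)
  case (Suc N)
  then show ?case using Q_tail_term_le[OF assms, of k N] by simp
qed simp

lemma Q_tail_partial_sum_le_1:
  assumes "digitseq m d"
  shows "(\<Sum>n<N. Q_tail_term k d n) \<le> 1"
  using Q_tail_partial_sum_le[OF assms, where k = k and N = N] Q_prod_pos[OF assms, of k N] by simp

lemma Q_tail_summable: "digitseq m d \<Longrightarrow> summable (Q_tail_term k d)"
  by (intro summableI_nonneg_bounded[where x = 1] Q_tail_term_nonneg Q_tail_partial_sum_le_1)

lemma Q_tail_nonneg: "digitseq m d \<Longrightarrow> 0 \<le> Q_tail k d"
  unfolding Q_tail_def by (intro suminf_nonneg Q_tail_summable Q_tail_term_nonneg)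

lemma Q_tail_le_1: "digitseq m d \<Longrightarrow> Q_tail k d \<le> 1"
  unfolding Q_tail_def by (intro suminf_le_const Q_tail_summable Q_tail_partial_sum_le_1)

lemma Q_tail_rec:
  assumes "digitseq m d"
  shows "Q_tail k d = aQ q (d (Suc k)) (Suc k) + q (d (Suc k)) (Suc k) * Q_tail (Suc k) d"
proof -
  have "(\<Sum>n. Q_tail_term k d (Suc n)) = (\<Sum>n. q (d (Suc k)) (Suc k) * Q_tail_term (Suc k) d n)"
    by (simp add: Q_tail_term_def Q_prod_Suc_shift algebra_simps)
  also have "\<dots> = q (d (Suc k)) (Suc k) * Q_tail (Suc k) d"
    unfolding Q_tail_def by (intro suminf_mult Q_tail_summable assms)
  moreover have "(\<Sum>n. Q_tail_term k d (Suc n)) = Q_tail k d - Q_tail_term k d 0"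
    unfolding Q_tail_def by (rule suminf_split_head[OF Q_tail_summable[OF assms]])
  ultimately show ?thesis by (simp add: Q_tail_term_def)
qed

lemma Q_tail_eq_1_step:
  assumes d: "digitseq m d" and one: "Q_tail k d = 1"
  shows "d (Suc k) = m (Suc k)" "Q_tail (Suc k) d = 1"
proof -
  have dk: "d (Suc k) \<le> m (Suc k)" using d unfolding digitseq_def by simp
  have q: "q (d (Suc k)) (Suc k) > 0" using q_pos[OF _ dk] by simp
  have "q (d (Suc k)) (Suc k) * Q_tail (Suc k) d \<le> q (d (Suc k)) (Suc k)"
    using Q_tail_le_1[OF d] q by (simp add: mult_left_le)
  with Q_tail_rec[OF d, of k] one aQ_plus_q_le_1[OF _ dk]
  have full: "aQ q (d (Suc k)) (Suc k) + q (d (Suc k)) (Suc k) = 1"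
    and "q (d (Suc k)) (Suc k) * Q_tail (Suc k) d = q (d (Suc k)) (Suc k)"
    by linarith+
  then show "Q_tail (Suc k) d = 1" using q by simp
  show "d (Suc k) = m (Suc k)"
    using full aQ_plus_q_less_1[of "Suc k" "d (Suc k)"] dk by fastforce
qed

lemma Q_tail_eq_1_imp_max_digits:
  assumes "digitseq m d" "Q_tail k d = 1" "j > k"
  shows "d j = m j"
proof -
  obtain i where "j = Suc (k + i)" using \<open>j > k\<close> less_iff_Suc_add by auto
  moreover have "d (Suc (k + i)) = m (Suc (k + i))" using assms(2)
    by (induction i arbitrary: k) (use Q_tail_eq_1_step[OF assms(1)] in fastforce)+
  ultimately show ?thesis by simp
qed

lemma Q_tail_le_if_first_digit_less:
  assumes d: "digitseq m d" and e: "digitseq m e" and less: "d (Suc k) < e (Suc k)"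
  shows "Q_tail k d \<le> Q_tail k e" "Q_tail k d = Q_tail k e \<Longrightarrow> Q_tail (Suc k) d = 1"
proof -
  let ?n = "Suc k"
  have dn: "d ?n \<le> m ?n" "e ?n \<le> m ?n" using d e unfolding digitseq_def by auto
  have qd: "q (d ?n) ?n > 0" and qe: "q (e ?n) ?n > 0" using q_pos dn by auto
  have gap: "aQ q (d ?n) ?n + q (d ?n) ?n \<le> aQ q (e ?n) ?n"
    using aQ_plus_q_le_aQ less dn by simp
  have d_part: "q (d ?n) ?n * Q_tail ?n d \<le> q (d ?n) ?n"
    using Q_tail_le_1[OF d] qd by (simp add: mult_left_le)
  have e_part: "0 \<le> q (e ?n) ?n * Q_tail ?n e"
    using Q_tail_nonneg[OF e] qe by simp
  show "Q_tail k d \<le> Q_tail k e"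
    using Q_tail_rec[OF d, of k] Q_tail_rec[OF e, of k] gap d_part e_part by linarith
  assume "Q_tail k d = Q_tail k e"
  then have "q (d ?n) ?n * Q_tail ?n d = q (d ?n) ?n"
    using Q_tail_rec[OF d, of k] Q_tail_rec[OF e, of k] gap d_part e_part by linarith
  then show "Q_tail ?n d = 1" using qd by simp
qed

lemma Q_tail_lex_mono:
  assumes d: "digitseq m d" and e: "digitseq m e"
  shows "\<forall>j. k < j \<and> j < n \<longrightarrow> d j = e j \<Longrightarrow> k < n \<Longrightarrow> d n < e n \<Longrightarrow>
           Q_tail k d \<le> Q_tail k e \<and> (Q_tail k d = Q_tail k e \<longrightarrow> (\<forall>j>n. d j = m j))"
proof (induction "n - Suc k" arbitrary: k)
  case 0
  then have "n = Suc k" by simp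
  then show ?case
    using Q_tail_le_if_first_digit_less[OF d e] Q_tail_eq_1_imp_max_digits[OF d] 0 by auto
next
  case (Suc t)
  have IH: "Q_tail (Suc k) d \<le> Q_tail (Suc k) e \<and>
            (Q_tail (Suc k) d = Q_tail (Suc k) e \<longrightarrow> (\<forall>j>n. d j = m j))"
    using Suc.hyps(1)[of "Suc k"] Suc.hyps(2) Suc.prems by auto
  have "d (Suc k) = e (Suc k)" using Suc.hyps(2) Suc.prems(1) by simp
  moreover have "q (d (Suc k)) (Suc k) > 0" using q_pos d unfolding digitseq_def by simp
  ultimately show ?case
    using Q_tail_rec[OF d, of k] Q_tail_rec[OF e, of k] IH by (auto intro: mult_left_mono)
qed

definition lex_less_at :: "(nat \<Rightarrow> nat) \<Rightarrow> (nat \<Rightarrow> nat) \<Rightarrow> nat \<Rightarrow> bool" where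
  "lex_less_at d c k \<longleftrightarrow> (\<forall>j<k. d (Suc j) = c (Suc j)) \<and> d (Suc k) < c (Suc k)"

lemma lex_less_at_unique: "lex_less_at d c k \<Longrightarrow> lex_less_at d c k' \<Longrightarrow> k = k'"
  unfolding lex_less_at_def by (metis less_irrefl nat_neq_iff)

lemma Q_tail_le_if_lex_less_at:
  assumes "digitseq m d" "digitseq m c" "lex_less_at d c k"
  shows "Q_tail 0 d \<le> Q_tail 0 c \<and> (Q_tail 0 d = Q_tail 0 c \<longrightarrow> (\<forall>j>Suc k. d j = m j))"
  using assms(3) unfolding lex_less_at_def
  by (intro Q_tail_lex_mono[OF assms(1,2)]) (auto simp: gr0_conv_Suc)

lemma lex_less_at_if_Q_tail_less:
  assumes d: "digitseq m d" and c: "digitseq m c" and less: "Q_tail 0 d < Q_tail 0 c"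
  obtains k where "lex_less_at d c k"
proof -
  have "\<exists>j\<ge>1. d j \<noteq> c j"
    using less Q_tail_cong[of 0 d c] by (metis less_irrefl less_one not_less)
  define n where "n = (LEAST j. j \<ge> 1 \<and> d j \<noteq> c j)"
  have n: "n \<ge> 1" "d n \<noteq> c n"
    using LeastI_ex[OF \<open>\<exists>j\<ge>1. d j \<noteq> c j\<close>] unfolding n_def by auto
  have before: "d j = c j" if "1 \<le> j" "j < n" for j
    using not_less_Least[of j "\<lambda>j. j \<ge> 1 \<and> d j \<noteq> c j"] that unfolding n_def by auto
  obtain k where k: "n = Suc k" using n(1) by (cases n) auto
  have "\<not> c n < d n"
    using Q_tail_lex_mono[OF c d, of 0 n] before n less by force
  then have "lex_less_at d c k" using n before unfolding k lex_less_at_def by auto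
  then show thesis by (rule that)
qed

end

lemma digitseq_negaDigits: "digitseq m d \<Longrightarrow> digitseq m (negaDigits m d)"
  unfolding digitseq_def negaDigits_def by auto

lemma tildeP_eq_negaDigits: "tildeP m p (d n) n = p (negaDigits m d n) n"
  unfolding tildeP_def negaDigits_def by auto

lemma tildeBeta_eq_negaDigits: "tildeBeta m p (d n) n = betaP p (negaDigits m d n) n"
  unfolding tildeBeta_def negaDigits_def by auto

locale digit_process = Q_matrix m q + prob_space M
  for m :: "nat \<Rightarrow> nat" and q :: "nat \<Rightarrow> nat \<Rightarrow> real" and M :: "'a measure" +
  fixes p :: "nat \<Rightarrow> nat \<Rightarrow> real" and \<xi> :: "nat \<Rightarrow> 'a \<Rightarrow> nat"
  assumes p_nonneg: "\<And>n i. n \<ge> 1 \<Longrightarrow> i \<le> m n \<Longrightarrow> p i n \<ge> 0"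
    and p_prod: "\<And>d. digitseq m d \<Longrightarrow> (\<lambda>N. \<Prod>n\<in>{1..N}. \<bar>p (d n) n\<bar>) \<longlonglongrightarrow> 0"
    and indep: "indep_vars (\<lambda>_. count_space UNIV) \<xi> {1..}"
    and xi_range: "\<And>n \<omega>. n \<ge> 1 \<Longrightarrow> \<omega> \<in> space M \<Longrightarrow> \<xi> n \<omega> \<le> m n"
    and xi_distr: "\<And>n i. n \<ge> 1 \<Longrightarrow> i \<le> m n \<Longrightarrow> prob {\<omega> \<in> space M. \<xi> n \<omega> = i} = p i n"
begin

definition eta :: "'a \<Rightarrow> real" where
  "eta \<omega> = DeltaQ q (\<lambda>n. \<xi> n \<omega>)"

definition cylinder :: "nat \<Rightarrow> (nat \<Rightarrow> nat) \<Rightarrow> 'a set" where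
  "cylinder N e = {\<omega> \<in> space M. \<forall>j<N. \<xi> (Suc j) \<omega> = e (Suc j)}"

definition digit_path :: "(nat \<Rightarrow> nat) \<Rightarrow> 'a set" where
  "digit_path e = {\<omega> \<in> space M. \<forall>j. \<xi> (Suc j) \<omega> = e (Suc j)}"

lemma xi_measurable [measurable]: "\<xi> (Suc j) \<in> measurable M (count_space UNIV)"
  using indep unfolding indep_vars_def2 by auto

lemma cylinder_sets [measurable]: "cylinder N e \<in> sets M"
  unfolding cylinder_def by measurable

lemma digit_path_sets [measurable]: "digit_path e \<in> sets M"
  unfolding digit_path_def by measurable

lemma eta_measurable [measurable]: "eta \<in> borel_measurable M"
proof -
  have "eta = (\<lambda>\<omega>. \<Sum>n. aQ q (\<xi> (Suc n) \<omega>) (Suc n) * (\<Prod>l<n. q (\<xi> (Suc l) \<omega>) (Suc l)))"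
    unfolding eta_def DeltaQ_def by (simp add: prod.atLeast1_atMost_eq)
  moreover have "(\<lambda>\<omega>. \<Sum>n. aQ q (\<xi> (Suc n) \<omega>) (Suc n) * (\<Prod>l<n. q (\<xi> (Suc l) \<omega>) (Suc l)))
                   \<in> borel_measurable M"
    by measurable
  ultimately show ?thesis by simp
qed

lemma digitseq_xi: "\<omega> \<in> space M \<Longrightarrow> digitseq m (\<lambda>n. \<xi> n \<omega>)"
  unfolding digitseq_def using xi_range by auto

lemma eta_eq_Q_tail: "eta \<omega> = Q_tail 0 (\<lambda>n. \<xi> n \<omega>)"
  unfolding eta_def DeltaQ_eq_Q_tail ..

lemma prob_cylinder:
  assumes e: "digitseq m e"
  shows "prob (cylinder N e) = (\<Prod>j<N. p (e (Suc j)) (Suc j))"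
proof (cases "N = 0")
  case False
  let ?F = "\<lambda>j. {\<xi> j -` A \<inter> space M | A. A \<in> sets (count_space UNIV)}"
  let ?A = "\<lambda>j. \<xi> j -` {e j} \<inter> space M"
  have "\<forall>A\<in>Pi {1..N} ?F. prob (\<Inter>j\<in>{1..N}. A j) = (\<Prod>j\<in>{1..N}. prob (A j))"
    using indep False unfolding indep_vars_def2 indep_sets_def by auto
  moreover have "?A \<in> Pi {1..N} ?F" by auto
  ultimately have "prob (\<Inter>j\<in>{1..N}. ?A j) = (\<Prod>j\<in>{1..N}. prob (?A j))" by blast
  moreover have "cylinder N e = (\<Inter>j\<in>{1..N}. ?A j)"
    using False unfolding cylinder_def by (auto simp: less_Suc_eq_le) (metis Suc_le_eq Suc_pred)
  moreover have "prob (?A j) = p (e j) j" if "j \<in> {1..N}" for j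
    using xi_distr[of j "e j"] that e unfolding digitseq_def by (simp add: vimage_def Int_def conj_commute)
  ultimately show ?thesis by (simp add: prod.atLeast1_atMost_eq)
qed (simp add: cylinder_def prob_space)

lemma digit_path_null:
  assumes e: "digitseq m e"
  shows "digit_path e \<in> null_sets M"
proof -
  have le: "prob (digit_path e) \<le> (\<Prod>j<N. p (e (Suc j)) (Suc j))" for N
    unfolding prob_cylinder[OF e, symmetric]
    by (intro finite_measure_mono) (auto simp: digit_path_def cylinder_def)
  have "(\<Prod>n\<in>{1..N}. \<bar>p (e n) n\<bar>) = (\<Prod>j<N. p (e (Suc j)) (Suc j))" for N
    using p_nonneg e unfolding digitseq_def by (simp add: prod.atLeast1_atMost_eq)
  then have "(\<lambda>N. \<Prod>j<N. p (e (Suc j)) (Suc j)) \<longlonglongrightarrow> 0"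
    using p_prod[OF e] by simp
  then have "prob (digit_path e) \<le> 0"
    using le by (intro LIMSEQ_le_const) auto
  then show ?thesis
    using measure_nonneg[of M "digit_path e"] by (simp add: prob_eq_0 AE_iff_null_sets)
qed

lemma prob_lex_less_at:
  assumes c: "digitseq m c"
  shows "\<P>(\<omega> in M. lex_less_at (\<lambda>n. \<xi> n \<omega>) c k)
           = betaP p (c (Suc k)) (Suc k) * (\<Prod>j<k. p (c (Suc j)) (Suc j))"
proof -
  have "{\<omega> \<in> space M. lex_less_at (\<lambda>n. \<xi> n \<omega>) c k} = (\<Union>i<c (Suc k). cylinder (Suc k) (c(Suc k := i)))"
    unfolding lex_less_at_def cylinder_def by (auto simp: less_Suc_eq)
  also have "prob \<dots> = (\<Sum>i<c (Suc k). prob (cylinder (Suc k) (c(Suc k := i))))"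
    by (intro measure_finite_Union) (auto simp: disjoint_family_on_def cylinder_def)
  also have "\<dots> = (\<Sum>i<c (Suc k). p i (Suc k) * (\<Prod>j<k. p (c (Suc j)) (Suc j)))"
  proof (intro sum.cong refl)
    fix i assume "i \<in> {..<c (Suc k)}"
    then have "digitseq m (c(Suc k := i))" using c unfolding digitseq_def by fastforce
    then show "prob (cylinder (Suc k) (c(Suc k := i))) = p i (Suc k) * (\<Prod>j<k. p (c (Suc j)) (Suc j))"
      by (simp add: prob_cylinder mult.commute)
  qed
  finally show ?thesis unfolding betaP_def by (simp add: sum_distrib_right)
qed

text \<open>The exceptional outcomes have all digits fixed: they agree with \<open>c\<close> up to position \<open>k\<close>, take
  some value \<open>i\<close> at \<open>k + 1\<close> and are maximal afterwards, i.e. they lie in \<open>digit_path (e k i)\<close>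
  (the \<open>min\<close> merely makes every \<open>e k i\<close> a digit sequence).\<close>
lemma AE_eta_less_iff_lex_less:
  assumes c: "digitseq m c"
  shows "AE \<omega> in M. eta \<omega> < Q_tail 0 c \<longleftrightarrow> (\<exists>k. lex_less_at (\<lambda>n. \<xi> n \<omega>) c k)"
proof -
  define e where "e k i j = (if j \<le> k then c j else if j = Suc k then min i (m j) else m j)"
    for k i j
  have "(\<Union>k. \<Union>i. digit_path (e k i)) \<in> null_sets M"
    using c by (intro null_sets_UN digit_path_null) (auto simp: digitseq_def e_def)
  moreover have "{\<omega> \<in> space M. \<not> (eta \<omega> < Q_tail 0 c \<longleftrightarrow> (\<exists>k. lex_less_at (\<lambda>n. \<xi> n \<omega>) c k))}
          \<subseteq> (\<Union>k. \<Union>i. digit_path (e k i))"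
  proof
    fix \<omega> assume "\<omega> \<in> {\<omega> \<in> space M. \<not> (eta \<omega> < Q_tail 0 c \<longleftrightarrow> (\<exists>k. lex_less_at (\<lambda>n. \<xi> n \<omega>) c k))}"
    then have \<omega>: "\<omega> \<in> space M"
      and mismatch: "eta \<omega> < Q_tail 0 c \<longleftrightarrow> \<not> (\<exists>k. lex_less_at (\<lambda>n. \<xi> n \<omega>) c k)"
      by auto
    have "\<not> eta \<omega> < Q_tail 0 c"
      using mismatch lex_less_at_if_Q_tail_less[OF digitseq_xi[OF \<omega>] c] by (metis eta_eq_Q_tail)
    moreover obtain k where lex: "lex_less_at (\<lambda>n. \<xi> n \<omega>) c k"
      using mismatch calculation by blast
    ultimately have max: "\<xi> j \<omega> = m j" if "j > Suc k" for j
      using Q_tail_le_if_lex_less_at[OF digitseq_xi[OF \<omega>] c lex] that by (simp add: eta_eq_Q_tail)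
    have "\<omega> \<in> digit_path (e k (\<xi> (Suc k) \<omega>))"
      using lex max xi_range \<omega> unfolding digit_path_def e_def lex_less_at_def
      by (auto simp: min_def not_le less_Suc_eq_le)
    then show "\<omega> \<in> (\<Union>k. \<Union>i. digit_path (e k i))" by blast
  qed
  ultimately show ?thesis by (rule AE_I')
qed

lemma prob_eta_less_neg:
  assumes "x < 0"
  shows "\<P>(\<omega> in M. eta \<omega> < x) = 0"
proof -
  have "\<not> eta \<omega> < x" if "\<omega> \<in> space M" for \<omega>
    using Q_tail_nonneg[OF digitseq_xi[OF that], of 0] assms by (simp add: eta_eq_Q_tail)
  then have "{\<omega> \<in> space M. eta \<omega> < x} = {}" by blast
  then show ?thesis by (metis measure_empty)
qed

lemma prob_eta_less_ge_1:
  assumes "1 \<le> x"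
  shows "\<P>(\<omega> in M. eta \<omega> < x) = 1"
proof (subst prob_Collect_eq_1)
  have "\<omega> \<in> digit_path m" if \<omega>: "\<omega> \<in> space M" and "\<not> eta \<omega> < x" for \<omega>
  proof -
    have "Q_tail 0 (\<lambda>n. \<xi> n \<omega>) = 1"
      using that assms Q_tail_le_1[OF digitseq_xi[OF \<omega>], of 0] by (simp add: eta_eq_Q_tail)
    then show ?thesis
      using Q_tail_eq_1_imp_max_digits[OF digitseq_xi[OF \<omega>]] \<omega> by (simp add: digit_path_def)
  qed
  then show "AE \<omega> in M. eta \<omega> < x"
    by (intro AE_I'[where N = "digit_path m"]) (auto simp: digit_path_null digitseq_def)
qed measurable

lemma prob_eta_less_sums:
  assumes c: "digitseq m c"
  shows "(\<lambda>k. betaP p (c (Suc k)) (Suc k) * (\<Prod>j<k. p (c (Suc j)) (Suc j)))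
           sums \<P>(\<omega> in M. eta \<omega> < Q_tail 0 c)"
proof -
  have "(\<lambda>k. \<P>(\<omega> in M. lex_less_at (\<lambda>n. \<xi> n \<omega>) c k)) sums \<P>(\<omega> in M. eta \<omega> < Q_tail 0 c)"
  proof (rule prob_sums)
    show "AE \<omega> in M. (\<forall>k. lex_less_at (\<lambda>n. \<xi> n \<omega>) c k \<longrightarrow> eta \<omega> < Q_tail 0 c)
                      \<and> (eta \<omega> < Q_tail 0 c \<longrightarrow> (\<exists>!k. lex_less_at (\<lambda>n. \<xi> n \<omega>) c k))"
      using AE_eta_less_iff_lex_less[OF c] by eventually_elim (auto intro: lex_less_at_unique)
  qed (auto simp: lex_less_at_def)
  then show ?thesis by (simp add: prob_lex_less_at[OF c])
qed

lemma prob_eta_less_DeltaNegQ: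
  assumes d: "digitseq m d"
  shows "\<P>(\<omega> in M. eta \<omega> < DeltaNegQ m q d) = betaP p (d 1) 1
           + (\<Sum>k. tildeBeta m p (d (k + 2)) (k + 2) * (\<Prod>j\<in>{1..k + 1}. tildeP m p (d j) j))"
proof -
  define c where "c = negaDigits m d"
  define g where "g = (\<lambda>k. betaP p (c (Suc k)) (Suc k) * (\<Prod>j<k. p (c (Suc j)) (Suc j)))"
  have "g sums \<P>(\<omega> in M. eta \<omega> < DeltaNegQ m q d)"
    using prob_eta_less_sums[OF digitseq_negaDigits[OF d]]
    by (simp add: g_def c_def DeltaNegQ_def DeltaQ_eq_Q_tail)
  then have "(\<lambda>k. g (Suc k)) sums (\<P>(\<omega> in M. eta \<omega> < DeltaNegQ m q d) - g 0)"
    by (simp add: sums_Suc_iff)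
  moreover have "g (Suc k) = tildeBeta m p (d (k + 2)) (k + 2) * (\<Prod>j\<in>{1..k + 1}. tildeP m p (d j) j)"
    for k
    unfolding g_def c_def tildeBeta_eq_negaDigits tildeP_eq_negaDigits
    by (simp add: prod.atLeast1_atMost_eq lessThan_Suc)
  moreover have "g 0 = betaP p (d 1) 1" by (simp add: g_def c_def negaDigits_def)
  ultimately show ?thesis by (simp add: sums_iff)
qed

end

theorem mainTheorem10:
  fixes m :: "nat \<Rightarrow> nat" and q p :: "nat \<Rightarrow> nat \<Rightarrow> real"
    and M :: "'a measure" and \<xi> :: "nat \<Rightarrow> 'a \<Rightarrow> nat"
  assumes q_pos: "\<And>n i. n \<ge> 1 \<Longrightarrow> i \<le> m n \<Longrightarrow> q i n > 0"
    and q_sum: "\<And>n. n \<ge> 1 \<Longrightarrow> (\<Sum>i\<le>m n. q i n) = 1"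
    and q_prod: "\<And>d. digitseq m d \<Longrightarrow> (\<lambda>N. \<Prod>n\<in>{1..N}. q (d n) n) \<longlonglongrightarrow> 0"
    and p_range: "\<And>n i. n \<ge> 1 \<Longrightarrow> i \<le> m n \<Longrightarrow> -1 < p i n \<and> p i n < 1"
    and p_sum: "\<And>n. n \<ge> 1 \<Longrightarrow> (\<Sum>i\<le>m n. p i n) = 1"
    and p_prod: "\<And>d. digitseq m d \<Longrightarrow> (\<lambda>N. \<Prod>n\<in>{1..N}. \<bar>p (d n) n\<bar>) \<longlonglongrightarrow> 0"
    and p_partial: "\<And>n c. n \<ge> 1 \<Longrightarrow> 1 \<le> c \<Longrightarrow> c \<le> m n \<Longrightarrow>
                       0 < (\<Sum>i<c. p i n) \<and> (\<Sum>i<c. p i n) < 1"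
    and p_nonneg: "\<And>n i. n \<ge> 1 \<Longrightarrow> i \<le> m n \<Longrightarrow> p i n \<ge> 0"
    and M: "prob_space M"
    and indep: "prob_space.indep_vars M (\<lambda>_. count_space UNIV) \<xi> {1..}"
    and xi_range: "\<And>n \<omega>. n \<ge> 1 \<Longrightarrow> \<omega> \<in> space M \<Longrightarrow> \<xi> n \<omega> \<le> m n"
    and xi_distr: "\<And>n i. n \<ge> 1 \<Longrightarrow> i \<le> m n \<Longrightarrow>
                       measure M {\<omega> \<in> space M. \<xi> n \<omega> = i} = p i n"
  shows "let \<eta> = (\<lambda>\<omega>. DeltaQ q (\<lambda>n. \<xi> n \<omega>));
             F = (\<lambda>x::real. measure M {\<omega> \<in> space M. \<eta> \<omega> < x})
         in (\<forall>x<0. F x = 0)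
          \<and> (\<forall>x\<ge>1. F x = 1)
          \<and> (\<forall>x d. 0 \<le> x \<and> x < 1 \<and> digitseq m d \<and> x = DeltaNegQ m q d \<longrightarrow>
               F x = betaP p (d 1) 1
                     + (\<Sum>k. tildeBeta m p (d (k + 2)) (k + 2)
                              * (\<Prod>j\<in>{1..k + 1}. tildeP m p (d j) j)))"
proof -
  interpret digit_process m q M p \<xi>
    by (intro digit_process.intro Q_matrix.intro M digit_process_axioms.intro)
      (use assms in auto)
  show ?thesis
    unfolding Let_def eta_def[symmetric] using prob_eta_less_neg prob_eta_less_ge_1 prob_eta_less_DeltaNegQ by auto
qed

end
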